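(* Let $\mathcal M$ satisfy Assumption (A), and let $F$ be a measurable function with $X=F(S,U_X)$ a.s. and $X_{S=s}=F(s,U_X)$ a.s. for all $s\in\mathcal S$. For $s\in\mathcal S$ let $f_s(u):=F(s,u)$. Then for any $s,s'\in\mathcal S$ and $\mu_s$-almost every $x\in\mathcal X_s$, $$\operatorname{supp}\big(\mu_{\langle s'|s\rangle}(\cdot\mid x)\big)\subseteq\overline{f_{s'}\circ f_s^{-1}(\{x\})},$$ where $f_s^{-1}(\{x\})$ is the preimage and the bar denotes closure in $\mathbb R^d$.
   Context: Let $(\Omega,\mathcal A,\mathbb P)$ be a probability space. A structural causal model (SCM) $\mathcal M=\langle U,G\rangle$ consists of two disjoint finite index sets $\mathcal I$ (endogenous) and $\mathcal J$ (exogenous), measurable product spaces $\mathcal V=\prod_{i\in\mathcal I}\mathcal V_i\subseteq\mathbb R^{|\mathcal I|}$ and $\mathcal U=\prod_{j\in\mathcal J}\mathcal U_j\subseteq\mathbb R^{|\mathcal J|}$, a random vector $U:\Omega\to\mathcal U$ (its components need not be independent), and for each $i\in\mathcal I$ subsets $\mathrm{Endo}(i)\subseteq\mathcal I$, $\mathrm{Exo}(i)\subseteq\mathcal J$ (endogenous and exogenous parents) and a measurable map $G_i:\mathcal V_{\mathrm{Endo}(i)}\times\mathcal U_{\mathrm{Exo}(i)}\to\mathcal V_i$. A random vector $V:\Omega\to\mathcal V$ is a solution of $\mathcal M$ if $V_i=G_i(V_{\mathrm{Endo}(i)},U_{\mathrm{Exo}(i)})$ $\mathbb P$-a.s. for every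 $i\in\mathcal I$. The graph of $\mathcal M$ has nodes $\mathcal I\cup\mathcal J$ and an edge $k\to l$ iff $l\in\mathcal I$ and $k\in\mathrm{Endo}(l)\cup\mathrm{Exo}(l)$. Assumption (A): the graph of $\mathcal M$ is acyclic; then $\mathcal M$ has a solution, unique up to $\mathbb P$-null sets. For $I\subseteq\mathcal I$ and $v_I\in\mathcal V_I$, the do-intervention $\mathrm{do}(V_I=v_I)$ produces the model $\langle U,\tilde G\rangle$ with $\tilde G_i\equiv v_i$ for $i\in I$ and $\tilde G_i=G_i$ otherwise (same $U$); it is again acyclic, and its solution is denoted $V_{V_I=v_I}$. Standing setting: the solution is $V=(X,S)$ where $X:\Omega\to\mathcal X\subseteq\mathbb R^d$ and $S:\Omega\to\mathcal S$ with $\mathcal S\subset\mathbb R$ finite and $\mathbb P(S=s)>0$ for all $s\in\mathcal S$. $U_X$ denotes the vector of exogenous parents of the components of $X$, and $U_S$ that of $S$. For $s\in\mathcal S$, $X_{S=s}$ denotes the $X$-component of the solution of the model intervened by $\mathrm{do}(S=s)$. Notation: $\mu_s:=\mathcal L(X\mid S=s)$ with support $\mathcal X_s$; $\mu_{S=s}:=\mathcal L(X_{S=s})$; $\mu_{\langle s'|s\rangle}:=\mathcal L(X_{S=s'}\mid S=s)$; $\mu_{\langle s'|s\rangle}(\cdot\mid x):=\mathcal L(X_{S=s'}\mid X=x,S=s)$ (structural counterfactual distribution of $x$). *)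

theory Defs
  imports "HOL-Probability.Probability"
begin

text \<open>The map G i is given on full vectors but is required to depend only on the parent
  coordinates Endo i and Exo i.\<close>

definition scm_graph :: "('i \<Rightarrow> 'i set) \<Rightarrow> ('i \<Rightarrow> 'j set) \<Rightarrow> ('i + 'j) rel" where
  "scm_graph Endo Exo =
     {(Inl k, Inl l) | k l. k \<in> Endo l} \<union> {(Inr j, Inl l) | j l. j \<in> Exo l}"

definition scm_wf ::
  "'o measure \<Rightarrow> ('i::finite \<Rightarrow> real set) \<Rightarrow> ('j::finite \<Rightarrow> real set)
   \<Rightarrow> ('i \<Rightarrow> 'i set) \<Rightarrow> ('i \<Rightarrow> 'j set)
   \<Rightarrow> ('i \<Rightarrow> real^'i \<Rightarrow> real^'j \<Rightarrow> real) \<Rightarrow> ('o \<Rightarrow> real^'j) \<Rightarrow> bool" where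
  "scm_wf M Vsp Usp Endo Exo G U \<longleftrightarrow>
     (\<forall>i. Vsp i \<in> sets borel) \<and> (\<forall>j. Usp j \<in> sets borel) \<and>
     U \<in> borel_measurable M \<and> (\<forall>\<omega>\<in>space M. \<forall>j. U \<omega> $ j \<in> Usp j) \<and>
     (\<forall>i. (\<lambda>(v, u). G i v u) \<in> borel_measurable (borel \<Otimes>\<^sub>M borel)) \<and>
     (\<forall>i v u. (\<forall>k. v $ k \<in> Vsp k) \<longrightarrow> (\<forall>j. u $ j \<in> Usp j) \<longrightarrow> G i v u \<in> Vsp i) \<and>
     (\<forall>i v v' u u'. (\<forall>k\<in>Endo i. v $ k = v' $ k) \<longrightarrow> (\<forall>j\<in>Exo i. u $ j = u' $ j)
        \<longrightarrow> G i v u = G i v' u')"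

definition scm_solution ::
  "'o measure \<Rightarrow> ('i::finite \<Rightarrow> real set) \<Rightarrow> ('i \<Rightarrow> real^'i \<Rightarrow> 'u \<Rightarrow> real)
   \<Rightarrow> ('o \<Rightarrow> 'u) \<Rightarrow> ('o \<Rightarrow> real^'i) \<Rightarrow> bool" where
  "scm_solution M Vsp G U V \<longleftrightarrow>
     V \<in> borel_measurable M \<and> (\<forall>\<omega>\<in>space M. \<forall>i. V \<omega> $ i \<in> Vsp i) \<and>
     (\<forall>i. AE \<omega> in M. V \<omega> $ i = G i (V \<omega>) (U \<omega>))"

definition do_int :: "('i \<Rightarrow> 'v \<Rightarrow> 'u \<Rightarrow> real) \<Rightarrow> 'i \<Rightarrow> real \<Rightarrow> ('i \<Rightarrow> 'v \<Rightarrow> 'u \<Rightarrow> real)" where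
  "do_int G i c = G(i := (\<lambda>v u. c))"

text \<open>Endogenous nodes are 'd option: None is S, Some k is the k-th component of X.\<close>
definition Xpart :: "real^('d::finite option) \<Rightarrow> real^'d" where
  "Xpart v = (\<chi> k. v $ Some k)"

definition Spart :: "real^('d::finite option) \<Rightarrow> real" where
  "Spart v = v $ None"

text \<open>The exogenous parents of X, encoded as a vector in real^'j whose coordinates outside
  JX are set to 0, and the corresponding space U_{U_X}.\<close>
definition proj_UX :: "'j set \<Rightarrow> real^'j \<Rightarrow> real^'j::finite" where
  "proj_UX JX u = (\<chi> j. if j \<in> JX then u $ j else 0)"

definition UX_space :: "('j::finite \<Rightarrow> real set) \<Rightarrow> 'j set \<Rightarrow> (real^'j) set" where
  "UX_space Usp JX = {u. (\<forall>j\<in>JX. u $ j \<in> Usp j) \<and> (\<forall>j. j \<notin> JX \<longrightarrow> u $ j = 0)}"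

definition cond_dist :: "'o measure \<Rightarrow> ('o \<Rightarrow> 'a::topological_space) \<Rightarrow> ('o \<Rightarrow> real) \<Rightarrow> real \<Rightarrow> 'a measure" where
  "cond_dist M X S s = distr (uniform_measure M {\<omega>\<in>space M. S \<omega> = s}) borel X"

definition is_cond_law_version ::
  "'o measure \<Rightarrow> ('o \<Rightarrow> 'b::topological_space) \<Rightarrow> ('o \<Rightarrow> 'a::topological_space) \<Rightarrow> ('o \<Rightarrow> real)
   \<Rightarrow> real \<Rightarrow> ('a \<Rightarrow> 'b measure) \<Rightarrow> bool" where
  "is_cond_law_version M Y X S s K \<longleftrightarrow>
     (\<forall>x. prob_space (K x) \<and> sets (K x) = sets borel) \<and>
     (\<forall>B\<in>sets borel. (\<lambda>x. emeasure (K x) B) \<in> borel_measurable borel) \<and>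
     (\<forall>A\<in>sets borel. \<forall>B\<in>sets borel.
        emeasure (uniform_measure M {\<omega>\<in>space M. S \<omega> = s}) {\<omega>\<in>space M. Y \<omega> \<in> B \<and> X \<omega> \<in> A}
        = (\<integral>\<^sup>+ x. indicator A x * emeasure (K x) B \<partial>cond_dist M X S s))"

definition measure_support :: "'a::metric_space measure \<Rightarrow> 'a set" where
  "measure_support N = {x. \<forall>e>0. emeasure N (ball x e) \<noteq> 0}"

end

(*
  On the event S = s we have X = f_s(U_X), and the intervened model gives
  X_{S=s'} = f_{s'}(U_X). So a regular conditional law of X_{S=s'} given X = x can only
  charge open sets that meet f_{s'}(f_s^{-1}{x}), for almost every x; testing this on a
  countable basis of open sets yields the support inclusion. The one subtlety is that the
  set of x whose fibre meets a given open set is a projection of a Borel set, hence only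
  analytic, so it is replaced by a Borel subset of full mass.
*)
theory Submission
  imports Defs
begin

text \<open>The image of a Borel set under a continuous map need not be Borel, but the countable union
  of the compact images of an inner-regular exhaustion is, and it misses only a null part.\<close>
lemma image_borel_inner_approx:
  fixes \<rho> :: "'a::{second_countable_topology, complete_space} measure" and f :: "'a \<Rightarrow> 'b::t2_space"
  assumes sets_\<rho>: "sets \<rho> = sets borel" and fin: "emeasure \<rho> (space \<rho>) \<noteq> \<infinity>"
    and f: "continuous_on UNIV f" and \<Gamma>: "\<Gamma> \<in> sets borel"
  shows "\<exists>B \<in> sets borel. B \<subseteq> f ` \<Gamma> \<and> emeasure \<rho> (\<Gamma> - f -` B) = 0"
proof -
  interpret finite_measure \<rho> using fin by (rule finite_measureI)
  let ?K = "{K. K \<subseteq> \<Gamma> \<and> compact K}"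
  have "{} \<in> ?K" by simp
  then obtain c :: "nat \<Rightarrow> ennreal" where c: "range c \<subseteq> emeasure \<rho> ` ?K"
    and sup_c: "Sup (emeasure \<rho> ` ?K) = Sup (range c)"
    using ennreal_SUP_countable_SUP[of ?K "emeasure \<rho>"] by blast
  have "\<forall>n. \<exists>K. K \<in> ?K \<and> c n = emeasure \<rho> K" using c by blast
  then obtain K where K: "\<And>n. K n \<in> ?K" and c_K: "\<And>n. c n = emeasure \<rho> (K n)"
    by metis
  define B where "B = (\<Union>n. f ` K n)"
  have "f ` K n \<in> sets borel" for n
    using K[of n] continuous_on_subset[OF f]
    by (intro borel_compact compact_continuous_image) auto
  then have B_borel: "B \<in> sets borel" unfolding B_def by blast
  have f_meas: "f \<in> borel_measurable borel"
    using f by (rule borel_measurable_continuous_onI)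
  have "\<Gamma> - f -` B \<in> sets borel"
    using \<Gamma> measurable_sets[OF f_meas B_borel] by auto
  then have rest: "\<Gamma> - f -` B \<in> sets \<rho>" using sets_\<rho> by simp
  have K_sets: "K n \<in> sets \<rho>" for n using K[of n] sets_\<rho> by (auto intro: borel_compact)
  have "emeasure \<rho> (\<Gamma> - f -` B) + c n \<le> emeasure \<rho> \<Gamma>" for n
  proof -
    have "(\<Gamma> - f -` B) \<inter> K n = {}" unfolding B_def by auto
    then have "emeasure \<rho> (\<Gamma> - f -` B) + c n = emeasure \<rho> ((\<Gamma> - f -` B) \<union> K n)"
      using c_K rest K_sets by (simp add: plus_emeasure)
    also have "\<dots> \<le> emeasure \<rho> \<Gamma>"
      using K[of n] \<Gamma> sets_\<rho> by (intro emeasure_mono) auto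
    finally show ?thesis .
  qed
  then have "emeasure \<rho> (\<Gamma> - f -` B) + Sup (range c) \<le> emeasure \<rho> \<Gamma>"
    by (simp add: ennreal_SUP_add_right SUP_le_iff)
  also have "Sup (range c) = emeasure \<rho> \<Gamma>"
    using inner_regular[OF sets_\<rho> fin \<Gamma>] sup_c by simp
  finally have "emeasure \<rho> \<Gamma> + emeasure \<rho> (\<Gamma> - f -` B) \<le> emeasure \<rho> \<Gamma> + 0"
    by (simp add: add.commute)
  then have "emeasure \<rho> (\<Gamma> - f -` B) = 0"
    using ennreal_add_left_cancel_le emeasure_finite by auto
  moreover have "B \<subseteq> f ` \<Gamma>" unfolding B_def using K by auto
  ultimately show ?thesis using B_borel by blast
qed

lemma cond_law_version_AE_zero:
  assumes K: "is_cond_law_version M Y X S s K"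
    and [measurable]: "X \<in> borel_measurable M" "Y \<in> borel_measurable M" "S \<in> borel_measurable M"
    and [measurable]: "N \<in> sets borel" "B \<in> sets borel"
    and null: "emeasure M {\<omega>\<in>space M. S \<omega> = s \<and> Y \<omega> \<in> B \<and> X \<omega> \<in> N} = 0"
  shows "AE x in cond_dist M X S s. x \<in> N \<longrightarrow> emeasure (K x) B = 0"
proof -
  let ?A = "{\<omega>\<in>space M. S \<omega> = s}"
  have [measurable]: "(\<lambda>x. emeasure (K x) B) \<in> borel_measurable borel"
    using K unfolding is_cond_law_version_def by simp
  have "(\<integral>\<^sup>+ x. indicator N x * emeasure (K x) B \<partial>cond_dist M X S s)
      = emeasure (uniform_measure M ?A) {\<omega>\<in>space M. Y \<omega> \<in> B \<and> X \<omega> \<in> N}"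
    using K unfolding is_cond_law_version_def by simp
  also have "\<dots> = 0"
  proof -
    have "?A \<inter> {\<omega>\<in>space M. Y \<omega> \<in> B \<and> X \<omega> \<in> N} = {\<omega>\<in>space M. S \<omega> = s \<and> Y \<omega> \<in> B \<and> X \<omega> \<in> N}"
      by auto
    then show ?thesis using null by simp
  qed
  finally have "AE x in cond_dist M X S s. indicator N x * emeasure (K x) B = 0"
    by (subst (asm) nn_integral_0_iff_AE) (simp_all add: cond_dist_def)
  then show ?thesis by (rule eventually_mono) (simp add: indicator_def)
qed

lemma measure_support_subset_closure:
  fixes N :: "'a::metric_space measure"
  assumes sets_N: "sets N = sets borel" and basis: "topological_basis \<B>"
    and null: "\<forall>b\<in>\<B>. b \<inter> T = {} \<longrightarrow> emeasure N b = 0"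
  shows "measure_support N \<subseteq> closure T"
proof
  fix y assume y: "y \<in> measure_support N"
  show "y \<in> closure T"
  proof (rule ccontr)
    assume "y \<notin> closure T"
    moreover have "open (- closure T)" by (rule open_Compl[OF closed_closure])
    ultimately obtain b where b: "b \<in> \<B>" "y \<in> b" "b \<subseteq> - closure T"
      using topological_basisE[OF basis] by blast
    then have "open b" using basis by (simp add: topological_basis_open)
    then obtain e where e: "e > 0" "ball y e \<subseteq> b" using b(2) open_contains_ball by blast
    have "b \<inter> T = {}" using b(3) closure_subset by blast
    then have "emeasure N b = 0" using null b(1) by blast
    moreover have "emeasure N (ball y e) \<le> emeasure N b"
      using \<open>open b\<close> e(2) sets_N by (intro emeasure_mono) auto
    ultimately show False using y e(1) unfolding measure_support_def by simp
  qed
qed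

lemma AE_snd_in_borel_subset_of_image:
  fixes Z :: "'o \<Rightarrow> 'u::polish_space" and X :: "'o \<Rightarrow> 'x::polish_space"
  assumes fin: "finite_measure M"
    and [measurable]: "Z \<in> borel_measurable M" "X \<in> borel_measurable M"
    and \<Gamma>: "\<Gamma> \<in> sets borel"
  shows "\<exists>B \<in> sets borel. B \<subseteq> snd ` \<Gamma> \<and> (AE \<omega> in M. (Z \<omega>, X \<omega>) \<in> \<Gamma> \<longrightarrow> X \<omega> \<in> B)"
proof -
  define \<rho> where "\<rho> = distr M borel (\<lambda>\<omega>. (Z \<omega>, X \<omega>))"
  have ZX_meas: "(\<lambda>\<omega>. (Z \<omega>, X \<omega>)) \<in> M \<rightarrow>\<^sub>M borel" by measurable
  have "sets \<rho> = sets borel" by (simp add: \<rho>_def)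
  moreover have "emeasure \<rho> (space \<rho>) \<noteq> \<infinity>"
    using ZX_meas finite_measure.emeasure_finite[OF fin] by (simp add: \<rho>_def emeasure_distr)
  moreover have "continuous_on UNIV (snd :: 'u \<times> 'x \<Rightarrow> 'x)" by (intro continuous_intros)
  ultimately have "\<exists>B \<in> sets borel. B \<subseteq> snd ` \<Gamma> \<and> emeasure \<rho> (\<Gamma> - snd -` B) = 0"
    using \<Gamma> by (rule image_borel_inner_approx)
  then obtain B where B_borel: "B \<in> sets borel" and B_sub: "B \<subseteq> snd ` \<Gamma>"
    and B_null: "emeasure \<rho> (\<Gamma> - snd -` B) = 0"
    by blast
  have snd_meas: "(snd :: 'u \<times> 'x \<Rightarrow> 'x) \<in> borel_measurable borel"
    by (intro borel_measurable_continuous_onI continuous_intros)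
  have rest_borel: "\<Gamma> - snd -` B \<in> sets borel"
    using sets.Diff[OF \<Gamma> measurable_sets[OF snd_meas B_borel]] by simp
  have "(\<lambda>\<omega>. (Z \<omega>, X \<omega>)) -` (\<Gamma> - snd -` B) \<inter> space M \<in> null_sets M"
    using emeasure_distr[OF ZX_meas rest_borel] measurable_sets[OF ZX_meas rest_borel] B_null
    by (simp add: \<rho>_def null_sets_def)
  then have "AE \<omega> in M. (Z \<omega>, X \<omega>) \<in> \<Gamma> \<longrightarrow> X \<omega> \<in> B"
    using AE_space[of M] by (elim AE_not_in[THEN eventually_rev_mp]) (simp add: eventually_mono)
  with B_borel B_sub show ?thesis by blast
qed

lemma cond_law_null_outside_fibre_image:
  fixes Z :: "'o \<Rightarrow> 'u::polish_space" and X :: "'o \<Rightarrow> 'x::polish_space"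
    and Y :: "'o \<Rightarrow> 'y::topological_space"
  assumes fin: "finite_measure M" and K: "is_cond_law_version M Y X S s K"
    and meas [measurable]: "Z \<in> borel_measurable M" "X \<in> borel_measurable M"
      "Y \<in> borel_measurable M" "S \<in> borel_measurable M"
    and [measurable]: "D \<in> sets borel" "f \<in> borel_measurable borel" "g \<in> borel_measurable borel"
    and structural: "AE \<omega> in M. S \<omega> = s \<longrightarrow> Z \<omega> \<in> D \<and> X \<omega> = f (Z \<omega>) \<and> Y \<omega> = g (Z \<omega>)"
    and b [measurable]: "b \<in> sets borel"
  shows "AE x in cond_dist M X S s. b \<inter> g ` {u \<in> D. f u = x} = {} \<longrightarrow> emeasure (K x) b = 0"
proof -
  have [measurable]: "(fst :: 'u \<times> 'x \<Rightarrow> 'u) \<in> borel_measurable borel"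
    "(snd :: 'u \<times> 'x \<Rightarrow> 'x) \<in> borel_measurable borel"
    by (intro borel_measurable_continuous_onI continuous_intros)+
  then have [measurable]: "(\<lambda>p. f (fst p)) \<in> borel_measurable (borel :: ('u \<times> 'x) measure)"
    "(\<lambda>p. g (fst p)) \<in> borel_measurable (borel :: ('u \<times> 'x) measure)"
    by (simp_all add: measurable_compose[of fst borel borel])
  define \<Gamma> where "\<Gamma> = {p \<in> space borel. fst p \<in> D \<and> f (fst p) = snd p \<and> g (fst p) \<in> b}"
  have "\<Gamma> \<in> sets (borel :: ('u \<times> 'x) measure)"
    unfolding \<Gamma>_def by measurable
  with fin meas(1,2) obtain B where B_borel: "B \<in> sets borel" and B_sub: "B \<subseteq> snd ` \<Gamma>"
    and cover: "AE \<omega> in M. (Z \<omega>, X \<omega>) \<in> \<Gamma> \<longrightarrow> X \<omega> \<in> B"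
    by (blast dest: AE_snd_in_borel_subset_of_image)
  have [measurable]: "(\<lambda>x. emeasure (K x) b) \<in> borel_measurable borel"
    using K unfolding is_cond_law_version_def by simp
  define N where "N = {x \<in> space borel. emeasure (K x) b \<noteq> 0 \<and> x \<notin> B}"
  have N_borel: "N \<in> sets borel" unfolding N_def using B_borel by measurable
  have "AE \<omega> in M. \<not> (S \<omega> = s \<and> Y \<omega> \<in> b \<and> X \<omega> \<in> N)"
    using structural cover by eventually_elim (auto simp: \<Gamma>_def N_def)
  then have "emeasure M {\<omega>\<in>space M. S \<omega> = s \<and> Y \<omega> \<in> b \<and> X \<omega> \<in> N} = 0"
    using N_borel by (subst (asm) AE_iff_measurable) auto
  then have "AE x in cond_dist M X S s. x \<in> N \<longrightarrow> emeasure (K x) b = 0"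
    by (intro cond_law_version_AE_zero[OF K meas(2-4) N_borel b])
  then show ?thesis
  proof (rule eventually_mono, intro impI)
    fix x assume disj: "b \<inter> g ` {u \<in> D. f u = x} = {}"
    have "x \<notin> B"
    proof
      assume "x \<in> B"
      then obtain p where "p \<in> \<Gamma>" "snd p = x" using B_sub by blast
      then have "fst p \<in> D" "f (fst p) = x" "g (fst p) \<in> b" by (simp_all add: \<Gamma>_def)
      with disj show False by blast
    qed
    then show "x \<in> N \<longrightarrow> emeasure (K x) b = 0 \<Longrightarrow> emeasure (K x) b = 0"
      by (simp add: N_def)
  qed
qed

theorem cond_law_support_subset_closure_image:
  fixes Z :: "'o \<Rightarrow> 'u::polish_space" and X :: "'o \<Rightarrow> 'x::polish_space"
    and Y :: "'o \<Rightarrow> 'y::{metric_space, second_countable_topology}"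
  assumes fin: "finite_measure M" and K: "is_cond_law_version M Y X S s K"
    and meas: "Z \<in> borel_measurable M" "X \<in> borel_measurable M"
      "Y \<in> borel_measurable M" "S \<in> borel_measurable M"
    and borel: "D \<in> sets borel" "f \<in> borel_measurable borel" "g \<in> borel_measurable borel"
    and structural: "AE \<omega> in M. S \<omega> = s \<longrightarrow> Z \<omega> \<in> D \<and> X \<omega> = f (Z \<omega>) \<and> Y \<omega> = g (Z \<omega>)"
  shows "AE x in cond_dist M X S s. measure_support (K x) \<subseteq> closure (g ` {u \<in> D. f u = x})"
proof -
  obtain \<B> :: "'y set set" where countable: "countable \<B>" and basis: "topological_basis \<B>"
    using ex_countable_basis by blast
  have "AE x in cond_dist M X S s. \<forall>b\<in>\<B>. b \<inter> g ` {u \<in> D. f u = x} = {} \<longrightarrow> emeasure (K x) b = 0"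
  proof (subst AE_ball_countable[OF countable], intro ballI)
    fix b assume "b \<in> \<B>"
    then have "b \<in> sets borel" using basis by (simp add: topological_basis_open)
    then show "AE x in cond_dist M X S s. b \<inter> g ` {u \<in> D. f u = x} = {} \<longrightarrow> emeasure (K x) b = 0"
      by (rule cond_law_null_outside_fibre_image[OF fin K meas borel structural])
  qed
  then show ?thesis
  proof (rule eventually_mono)
    fix x
    have "sets (K x) = sets borel" using K by (simp add: is_cond_law_version_def)
    then show "\<forall>b\<in>\<B>. b \<inter> g ` {u \<in> D. f u = x} = {} \<longrightarrow> emeasure (K x) b = 0 \<Longrightarrow>
        measure_support (K x) \<subseteq> closure (g ` {u \<in> D. f u = x})"
      using basis by (rule measure_support_subset_closure)
  qed
qed

lemma Xpart_borel_measurable [measurable]: "Xpart \<in> borel_measurable borel"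
  unfolding Xpart_def by (intro borel_measurable_continuous_onI continuous_intros)

lemma Spart_borel_measurable [measurable]: "Spart \<in> borel_measurable borel"
  unfolding Spart_def by (intro borel_measurable_continuous_onI continuous_intros)

lemma proj_UX_borel_measurable [measurable]: "proj_UX JX \<in> (borel_measurable borel :: (real^'j::finite \<Rightarrow> _) set)"
  unfolding proj_UX_def
proof (intro borel_measurable_continuous_onI continuous_on_vec_lambda)
  show "continuous_on UNIV (\<lambda>u. if j \<in> JX then u $ j else 0)" for j :: 'j
    by (cases "j \<in> JX") (simp_all add: continuous_intros)
qed

lemma UX_space_borel:
  assumes "\<forall>j. Usp j \<in> sets borel"
  shows "UX_space Usp JX \<in> sets (borel :: (real^'j::finite) measure)"
proof -
  have "UX_space Usp JX = {u\<in>space borel. (\<forall>j\<in>JX. u $ j \<in> Usp j) \<and> (\<forall>j\<in>-JX. u $ j = 0)}"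
    unfolding UX_space_def by auto
  also have "\<dots> \<in> sets borel" using assms by measurable
  finally show ?thesis .
qed

theorem proposition1:
  fixes M :: "'o measure"
    and Vsp :: "'d::finite option \<Rightarrow> real set" and Usp :: "'j::finite \<Rightarrow> real set"
    and Endo :: "'d option \<Rightarrow> 'd option set" and Exo :: "'d option \<Rightarrow> 'j set"
    and G :: "'d option \<Rightarrow> real^('d option) \<Rightarrow> real^'j \<Rightarrow> real"
    and U :: "'o \<Rightarrow> real^'j"
    and V :: "'o \<Rightarrow> real^('d option)"
    and W :: "real \<Rightarrow> 'o \<Rightarrow> real^('d option)"
    and F :: "real \<Rightarrow> real^'j \<Rightarrow> real^'d"
  defines "X \<equiv> (\<lambda>\<omega>. Xpart (V \<omega>))"
    and "S \<equiv> (\<lambda>\<omega>. Spart (V \<omega>))"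
    and "JX \<equiv> (\<Union>k. Exo (Some k))"
  assumes prob: "prob_space M"
    and wf: "scm_wf M Vsp Usp Endo Exo G U"
    and acyc: "acyclic (scm_graph Endo Exo)"
    and sol: "scm_solution M Vsp G U V"
    and Sfin: "finite (Vsp None)"
    and Spos: "\<forall>s\<in>Vsp None. prob_space.prob M {\<omega>\<in>space M. S \<omega> = s} > 0"
    and Wsol: "\<forall>s\<in>Vsp None. scm_solution M Vsp (do_int G None s) U (W s)"
    and Fmeas: "(\<lambda>(s, u). F s u) \<in> borel_measurable (borel \<Otimes>\<^sub>M borel)"
    and FX: "AE \<omega> in M. X \<omega> = F (S \<omega>) (proj_UX JX (U \<omega>))"
    and FW: "\<forall>s\<in>Vsp None. AE \<omega> in M. Xpart (W s \<omega>) = F s (proj_UX JX (U \<omega>))"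
  shows "\<forall>s\<in>Vsp None. \<forall>s'\<in>Vsp None. \<forall>K.
           is_cond_law_version M (\<lambda>\<omega>. Xpart (W s' \<omega>)) X S s K \<longrightarrow>
           (AE x in cond_dist M X S s.
              x \<in> measure_support (cond_dist M X S s) \<longrightarrow>
              measure_support (K x) \<subseteq>
                closure (F s' ` {u \<in> UX_space Usp JX. F s u = x}))"
proof (intro ballI allI impI)
  fix s s' K
  assume s': "s' \<in> Vsp None" and K: "is_cond_law_version M (\<lambda>\<omega>. Xpart (W s' \<omega>)) X S s K"
  have U: "U \<in> borel_measurable M" "\<forall>\<omega>\<in>space M. \<forall>j. U \<omega> $ j \<in> Usp j" "\<forall>j. Usp j \<in> sets borel"
    using wf unfolding scm_wf_def by simp_all
  have [measurable]: "V \<in> borel_measurable M" "W s' \<in> borel_measurable M"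
    using sol Wsol s' unfolding scm_solution_def by auto
  have rv_meas: "(\<lambda>\<omega>. proj_UX JX (U \<omega>)) \<in> borel_measurable M" "X \<in> borel_measurable M"
      "(\<lambda>\<omega>. Xpart (W s' \<omega>)) \<in> borel_measurable M" "S \<in> borel_measurable M"
    using U(1) unfolding X_def S_def by measurable
  have fin: "finite_measure M" using prob by (simp add: prob_space_def)
  have F_section: "F t \<in> borel_measurable borel" for t
  proof -
    have "Pair t \<in> borel \<rightarrow>\<^sub>M borel \<Otimes>\<^sub>M borel" by measurable
    from measurable_compose[OF this Fmeas] show ?thesis by simp
  qed
  have "AE \<omega> in M. proj_UX JX (U \<omega>) \<in> UX_space Usp JX"
    using U(2) by (intro AE_I2) (simp add: UX_space_def proj_UX_def)
  then have "AE \<omega> in M. S \<omega> = s \<longrightarrow> proj_UX JX (U \<omega>) \<in> UX_space Usp JX \<and>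
      X \<omega> = F s (proj_UX JX (U \<omega>)) \<and> Xpart (W s' \<omega>) = F s' (proj_UX JX (U \<omega>))"
    using FX bspec[OF FW s'] by eventually_elim simp
  then have "AE x in cond_dist M X S s.
      measure_support (K x) \<subseteq> closure (F s' ` {u \<in> UX_space Usp JX. F s u = x})"
    by (rule cond_law_support_subset_closure_image[OF fin K rv_meas
          UX_space_borel[OF U(3)] F_section F_section])
  then show "AE x in cond_dist M X S s. x \<in> measure_support (cond_dist M X S s) \<longrightarrow>
      measure_support (K x) \<subseteq> closure (F s' ` {u \<in> UX_space Usp JX. F s u = x})"
    by (rule eventually_mono) simp
qed

end
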